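(* Let $w$ be a word and $TG(w) = (V, E_1, \dots, E_T)$ the temporal graph it represents, with start points $S_1 < \dots < S_T$, and suppose $TG(w)$ is connected in every timestep. Then for every vertex $v_x \in V$: $x \in \mathrm{letters}(w[S_t, S_{t+d(v_x)+1} - 1])$ for all $t \in [1, T - d(v_x) - 2]$, and $x \in \mathrm{letters}(w[S_{T - d(v_x) - 1}, |w|])$.
   Context: Words are over $\Sigma=\{1,\dots,n\}$; $w[i]$ is the $i$-th letter, $w[i,j]$ the factor $w[i]\cdots w[j]$, $\mathrm{letters}(u)$ the set of symbols occurring in $u$, $\pi_{\mathcal S}(w)$ the subsequence of $w$ of all occurrences of symbols in $\mathcal S$. Symbols $x,y$ alternate in $w$ if $\pi_{\{x,y\}}(w) \in \{(xy)^k, (xy)^kx, (yx)^k, (yx)^ky : k \ge 0\}$. $G(w)$ has vertex set $V=\{v_1,\dots,v_n\}$ and undirected edge $(v_x,v_y)$ iff $x\neq y$ alternate in $w$; $d(v)$ is the degree of $v$ in $G(w)$. Start points: $S_1=1$, and $S_i$ is the least index $j>S_{i-1}$ with $w[j] \in \mathrm{letters}(w[S_{i-1},j-1])$; $S_1<\dots<S_T$ are all start points. The $t$-th timestep factor is $w[S_t,S_{t+1}-1]$ ($t<T$) or $w[S_T,|w|]$ ($t=T$). $TG(w)=(V,E_1,\dots,E_T)$ with $E_t$ the set of edges $(v_x,v_y)$ of $G(w)$ with $x$ or $y$ occurring in the $t$-th timestep factor. Connected in every timestep means $(V,E_t)$ is connected for all $t$. *)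

theory Defs
  imports Main
begin

text \<open>Words are lists of naturals over the alphabet {1..n}; positions are 1-based:
  w[i] = w ! (i - 1).\<close>

definition letter :: "nat list \<Rightarrow> nat \<Rightarrow> nat" where
  "letter w i = w ! (i - 1)"

definition letters :: "nat list \<Rightarrow> nat \<Rightarrow> nat \<Rightarrow> nat set" where
  "letters w i j = {letter w k | k. i \<le> k \<and> k \<le> j \<and> 1 \<le> k \<and> k \<le> length w}"

definition proj :: "nat set \<Rightarrow> nat list \<Rightarrow> nat list" where
  "proj S w = filter (\<lambda>c. c \<in> S) w"

definition alternate :: "nat list \<Rightarrow> nat \<Rightarrow> nat \<Rightarrow> bool" where
  "alternate w x y \<longleftrightarrow> (\<exists>k. proj {x, y} w = concat (replicate k [x, y])
      \<or> proj {x, y} w = concat (replicate k [x, y]) @ [x]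
      \<or> proj {x, y} w = concat (replicate k [y, x])
      \<or> proj {x, y} w = concat (replicate k [y, x]) @ [y])"

text \<open>Edges of G(w) on vertex set {1..n} (vertex v_x identified with x).\<close>
definition gedge :: "nat \<Rightarrow> nat list \<Rightarrow> nat \<Rightarrow> nat \<Rightarrow> bool" where
  "gedge n w x y \<longleftrightarrow> x \<in> {1..n} \<and> y \<in> {1..n} \<and> x \<noteq> y \<and> alternate w x y"

definition degree :: "nat \<Rightarrow> nat list \<Rightarrow> nat \<Rightarrow> nat" where
  "degree n w x = card {y. gedge n w x y}"

definition has_next :: "nat list \<Rightarrow> nat \<Rightarrow> bool" where
  "has_next w s \<longleftrightarrow> (\<exists>j. s < j \<and> j \<le> length w \<and> letter w j \<in> letters w s (j - 1))"

definition next_start :: "nat list \<Rightarrow> nat \<Rightarrow> nat" where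
  "next_start w s = (LEAST j. s < j \<and> j \<le> length w \<and> letter w j \<in> letters w s (j - 1))"

text \<open>st w i = S_{i+1}; after the last start point the value is irrelevant (|w|+1).\<close>
primrec st :: "nat list \<Rightarrow> nat \<Rightarrow> nat" where
  "st w 0 = 1"
| "st w (Suc i) = (if has_next w (st w i) then next_start w (st w i) else length w + 1)"

definition S :: "nat list \<Rightarrow> nat \<Rightarrow> nat" where
  "S w i = st w (i - 1)"

definition T :: "nat list \<Rightarrow> nat" where
  "T w = (LEAST i. 1 \<le> i \<and> \<not> has_next w (S w i))"

definition step_letters :: "nat list \<Rightarrow> nat \<Rightarrow> nat set" where
  "step_letters w t = (if t < T w then letters w (S w t) (S w (Suc t) - 1)
                       else letters w (S w (T w)) (length w))"

definition tedge :: "nat \<Rightarrow> nat list \<Rightarrow> nat \<Rightarrow> nat \<Rightarrow> nat \<Rightarrow> bool" where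
  "tedge n w t x y \<longleftrightarrow> gedge n w x y \<and> (x \<in> step_letters w t \<or> y \<in> step_letters w t)"

definition connected_on :: "nat set \<Rightarrow> (nat \<Rightarrow> nat \<Rightarrow> bool) \<Rightarrow> bool" where
  "connected_on V E \<longleftrightarrow> (\<forall>u\<in>V. \<forall>v\<in>V. (\<lambda>a b. a \<in> V \<and> b \<in> V \<and> E a b)\<^sup>*\<^sup>* u v)"

definition connected_every_timestep :: "nat \<Rightarrow> nat list \<Rightarrow> bool" where
  "connected_every_timestep n w \<longleftrightarrow> (\<forall>t. 1 \<le> t \<and> t \<le> T w \<longrightarrow> connected_on {1..n} (tedge n w t))"

end

(* Let d = d(v_x) and suppose x is absent from the d + 1 consecutive timesteps t, ..., t + d.
   In each of them connectivity gives an edge of E_t' at v_x, whose other endpoint y must then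
   occur in the t'-th factor. Since x and y alternate, two occurrences of y are always separated
   by an occurrence of x, so distinct timesteps yield distinct neighbours: v_x would have
   d + 1 neighbours. The bound on the suffix is the case t = T - d - 1. *)
theory Submission
  imports Defs
begin

lemma next_start_bounds:
  assumes "has_next w s"
  shows "s < next_start w s" and "next_start w s \<le> length w"
proof -
  let ?P = "\<lambda>j. s < j \<and> j \<le> length w \<and> letter w j \<in> letters w s (j - 1)"
  from assms obtain j where "?P j"
    unfolding has_next_def by blast
  then have "?P (next_start w s)"
    unfolding next_start_def by (rule LeastI)
  then show "s < next_start w s" and "next_start w s \<le> length w"
    by auto
qed

lemma one_le_S: "1 \<le> S w i"
proof -
  have "1 \<le> st w k" for k
    by (induction k) (auto dest: next_start_bounds(1))
  then show ?thesis
    by (simp add: S_def)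
qed

lemma has_next_S:
  assumes "1 \<le> i" "i < T w"
  shows "has_next w (S w i)"
  using not_less_Least[of i "\<lambda>i. 1 \<le> i \<and> \<not> has_next w (S w i)"] assms
  unfolding T_def by blast

lemma S_Suc:
  assumes "1 \<le> i" "has_next w (S w i)"
  shows "S w (Suc i) = next_start w (S w i)"
  using assms by (cases i) (simp_all add: S_def)

lemma S_less_S_Suc:
  assumes "1 \<le> i" "i < T w"
  shows "S w i < S w (Suc i)" and "S w (Suc i) \<le> length w"
  using next_start_bounds[OF has_next_S[OF assms]] S_Suc[OF assms(1) has_next_S[OF assms]]
  by simp_all

lemma S_strict_mono:
  assumes "1 \<le> i" "i < j" "j \<le> T w"
  shows "S w i < S w j"
proof -
  have "Suc i \<le> j" using assms(2) by simp
  then show ?thesis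
    using assms(3)
  proof (induction j rule: dec_induct)
    case base
    then show ?case using S_less_S_Suc(1)[OF assms(1)] by simp
  next
    case (step j)
    then show ?case using S_less_S_Suc(1)[of j w] assms(1) by simp
  qed
qed

lemma S_mono:
  assumes "1 \<le> i" "i \<le> j" "j \<le> T w"
  shows "S w i \<le> S w j"
  using S_strict_mono[of i j w] assms by (cases "i = j") auto

lemma letters_mono:
  assumes "a' \<le> a" "b \<le> b'"
  shows "letters w a b \<subseteq> letters w a' b'"
  using assms unfolding letters_def by fastforce

lemma letters_subset_letters_length: "letters w a b \<subseteq> letters w a (length w)"
  unfolding letters_def by auto

lemma step_letters_subset_letters_S:
  assumes "1 \<le> a" "a \<le> t" "t < b" "b \<le> T w"
  shows "step_letters w t \<subseteq> letters w (S w a) (S w b - 1)"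
proof -
  have "S w a \<le> S w t" "S w (Suc t) \<le> S w b"
    using assms by (auto intro!: S_mono)
  then show ?thesis
    using assms unfolding step_letters_def by (simp add: letters_mono)
qed

lemma letter_S_mem_step_letters:
  assumes "1 \<le> t" "t < T w"
  shows "letter w (S w t) \<in> step_letters w t"
  using assms S_less_S_Suc[OF assms] one_le_S[of w t]
  unfolding step_letters_def letters_def by fastforce

lemma letter_mem_set:
  assumes "1 \<le> p" "p \<le> length w"
  shows "letter w p \<in> set w"
  using assms unfolding letter_def by simp

lemma set_drop_take_conv: "set (drop m (take j w)) = {w ! k | k. m \<le> k \<and> k < j \<and> k < length w}"
proof -
  have "set (drop m (take j w)) = {w ! (m + l) | l. m + l < j \<and> m + l < length w}"
    by (auto simp: in_set_conv_nth less_diff_conv add.commute) (blast, auto)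
  also have "\<dots> = {w ! k | k. m \<le> k \<and> k < j \<and> k < length w}"
    by (auto; metis le_add_diff_inverse)
  finally show ?thesis .
qed

lemma letters_conv_set_drop_take: "letters w i j = set (drop (i - 1) (take j w))"
proof -
  have "letters w i j = {w ! k | k. i - 1 \<le> k \<and> k < j \<and> k < length w}"
  proof (intro equalityI subsetI)
    fix c assume "c \<in> letters w i j"
    then obtain k where "i \<le> k" "k \<le> j" "1 \<le> k" "k \<le> length w" "c = w ! (k - 1)"
      unfolding letters_def letter_def by blast
    then show "c \<in> {w ! k | k. i - 1 \<le> k \<and> k < j \<and> k < length w}"
      by (intro CollectI exI[of _ "k - 1"]) auto
  next
    fix c assume "c \<in> {w ! k | k. i - 1 \<le> k \<and> k < j \<and> k < length w}"
    then obtain k where "i - 1 \<le> k" "k < j" "k < length w" "c = w ! k"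
      by blast
    then show "c \<in> letters w i j"
      unfolding letters_def letter_def by (intro CollectI exI[of _ "Suc k"]) auto
  qed
  then show ?thesis
    by (simp add: set_drop_take_conv)
qed

lemma successively_neq_concat_replicate:
  assumes "a \<noteq> b" "xs = [] \<or> xs = [a]"
  shows "successively (\<noteq>) (concat (replicate k [a, b]) @ xs)"
  using assms by (induction k) (auto simp: successively_Cons hd_append gr0_conv_Suc)

lemma successively_neq_proj_if_alternate:
  assumes "alternate w x y" "x \<noteq> y"
  shows "successively (\<noteq>) (proj {x, y} w)"
  using assms successively_neq_concat_replicate[of x y "[]"] successively_neq_concat_replicate[of x y "[x]"]
    successively_neq_concat_replicate[of y x "[]"] successively_neq_concat_replicate[of y x "[y]"]
  unfolding alternate_def by auto

lemma take_eq_take_nth_drop: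
  assumes "i < j" "j \<le> length w"
  shows "take j w = take i w @ w ! i # drop (Suc i) (take j w)"
proof -
  have "take j w = take i (take j w) @ drop i (take j w)"
    by (rule append_take_drop_id[symmetric])
  also have "drop i (take j w) = take j w ! i # drop (Suc i) (take j w)"
    using assms by (intro Cons_nth_drop_Suc[symmetric]) simp
  finally show ?thesis
    using assms by (simp add: min_absorb1)
qed

lemma successively_neq_filter_separates:
  assumes "successively (\<noteq>) (filter (\<lambda>c. c \<in> {x, y}) w)"
    and "i < j" "j < length w" "w ! i = y" "w ! j = y"
  shows "x \<in> set (drop i (take (Suc j) w))"
proof (rule ccontr)
  define P where "P = (\<lambda>c. c \<in> {x, y})"
  define m where "m = drop (Suc i) (take j w)"
  have split: "take (Suc j) w = take i w @ y # m @ [y]"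
    using take_eq_take_nth_drop[of i j w] assms(2-5) unfolding m_def
    by (simp add: take_Suc_conv_app_nth)
  assume "x \<notin> set (drop i (take (Suc j) w))"
  then have "set (filter P m) \<subseteq> {y}"
    using assms(2,3) unfolding split P_def by auto
  moreover have "filter P w = filter P (take i w) @ (y # filter P m @ [y]) @ filter P (drop (Suc j) w)"
    by (subst append_take_drop_id[symmetric, of w "Suc j"]) (simp add: split P_def)
  then have "successively (\<noteq>) (y # filter P m @ [y])"
    using assms(1) unfolding P_def by (simp only: successively_append_iff)
  ultimately show False
    by (cases "filter P m") (auto simp: successively_Cons)
qed

lemma alternate_separates:
  assumes "alternate w x y" "x \<noteq> y" "1 \<le> p" "p < q" "q \<le> length w"
    and "letter w p = y" "letter w q = y"
  shows "x \<in> letters w p q"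
proof -
  have "x \<in> set (drop (p - 1) (take (Suc (q - 1)) w))"
    using successively_neq_proj_if_alternate[OF assms(1,2)] assms(3-7)
    unfolding proj_def letter_def by (intro successively_neq_filter_separates) auto
  then show ?thesis
    using assms(4) by (simp add: letters_conv_set_drop_take)
qed

lemma connected_on_ex_edge:
  assumes "connected_on V E" "x \<in> V" "z \<in> V" "x \<noteq> z"
  shows "\<exists>y\<in>V. E x y"
proof -
  have "(\<lambda>a b. a \<in> V \<and> b \<in> V \<and> E a b)\<^sup>*\<^sup>* x z"
    using assms(1-3) unfolding connected_on_def by blast
  then show ?thesis
    using assms(4) by (cases rule: converse_rtranclpE) auto
qed

lemma ex_gedge_into_step_letters:
  assumes "set w \<subseteq> {1..n}" "connected_on {1..n} (tedge n w t)" "1 \<le> t" "t < T w"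
    and "x \<in> {1..n}" "x \<notin> step_letters w t"
  shows "\<exists>y. gedge n w x y \<and> y \<in> step_letters w t"
proof -
  define z where "z = letter w (S w t)"
  have "z \<in> step_letters w t"
    unfolding z_def using assms(3,4) by (rule letter_S_mem_step_letters)
  moreover have "z \<in> {1..n}"
  proof -
    have "S w t \<le> length w"
      using S_less_S_Suc[OF assms(3,4)] by simp
    then have "z \<in> set w"
      unfolding z_def by (rule letter_mem_set[OF one_le_S])
    then show ?thesis
      using assms(1) by blast
  qed
  ultimately obtain y where "tedge n w t x y"
    using connected_on_ex_edge[OF assms(2,5)] assms(6) by metis
  then show ?thesis
    using assms(6) unfolding tedge_def by blast
qed

lemma gedge_in_two_steps_separated:
  assumes "gedge n w x y" "1 \<le> t1" "t1 < t2" "t2 < T w"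
    and "y \<in> step_letters w t1" "y \<in> step_letters w t2"
  shows "x \<in> letters w (S w t1) (S w (Suc t2) - 1)"
proof -
  have "t1 < T w" using assms(3,4) by simp
  obtain p1 where p1: "S w t1 \<le> p1" "p1 \<le> S w (Suc t1) - 1" "1 \<le> p1" "letter w p1 = y"
    using assms(5) \<open>t1 < T w\<close> unfolding step_letters_def letters_def by auto
  obtain p2 where p2: "S w t2 \<le> p2" "p2 \<le> S w (Suc t2) - 1" "p2 \<le> length w" "letter w p2 = y"
    using assms(6,4) unfolding step_letters_def letters_def by auto
  have "S w (Suc t1) \<le> S w t2"
    using assms(2-4) by (intro S_mono) auto
  then have "p1 < p2"
    using p1(2) p2(1) S_less_S_Suc(1)[OF assms(2) \<open>t1 < T w\<close>] by linarith
  then have "x \<in> letters w p1 p2"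
    using assms(1) p1 p2 unfolding gedge_def by (intro alternate_separates) auto
  then show ?thesis
    using p1(1) p2(2) letters_mono by blast
qed

lemma mem_letters_degree_window:
  assumes "set w \<subseteq> {1..n}" "connected_every_timestep n w" "x \<in> {1..n}"
    and "1 \<le> t" "t + degree n w x + 1 \<le> T w"
  shows "x \<in> letters w (S w t) (S w (t + degree n w x + 1) - 1)"
proof (rule ccontr)
  define d where "d = degree n w x"
  define N where "N = {y. gedge n w x y}"
  define W where "W = {t..t + d}"
  define L where "L = letters w (S w t) (S w (t + d + 1) - 1)"
  assume "x \<notin> letters w (S w t) (S w (t + degree n w x + 1) - 1)"
  then have "x \<notin> L"
    unfolding L_def d_def .
  then have x_notin: "x \<notin> step_letters w t'" if "t' \<in> W" for t'
    using that assms(4,5) step_letters_subset_letters_S[of t t' "t + d + 1" w]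
    unfolding W_def L_def d_def by auto
  have "\<exists>y\<in>N. y \<in> step_letters w t'" if "t' \<in> W" for t'
    using that ex_gedge_into_step_letters[OF assms(1) _ _ _ assms(3) x_notin] assms(2,4,5)
    unfolding connected_every_timestep_def W_def N_def d_def by auto
  then obtain g where g: "g t' \<in> N" "g t' \<in> step_letters w t'" if "t' \<in> W" for t'
    by metis
  have "g t1 \<noteq> g t2" if "t1 \<in> W" "t2 \<in> W" "t1 < t2" for t1 t2
  proof
    assume "g t1 = g t2"
    then have "g t1 \<in> step_letters w t1" "g t1 \<in> step_letters w t2"
      using g(2) that(1,2) by metis+
    moreover have "gedge n w x (g t1)"
      using g(1) that(1) unfolding N_def by blast
    ultimately have "x \<in> letters w (S w t1) (S w (Suc t2) - 1)"
      using that assms(4,5) unfolding W_def d_def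
      by (intro gedge_in_two_steps_separated) auto
    moreover have "letters w (S w t1) (S w (Suc t2) - 1) \<subseteq> L"
      using that assms(4,5) unfolding L_def W_def d_def
      by (intro letters_mono diff_le_mono S_mono) auto
    ultimately show False
      using \<open>x \<notin> L\<close> by blast
  qed
  then have "inj_on g W"
    by (metis inj_onI linorder_neqE_nat)
  then have "card W \<le> card N"
    using g finite_subset[of N "{1..n}"] unfolding N_def gedge_def
    by (intro card_inj_on_le) auto
  then show False
    unfolding W_def N_def d_def degree_def by simp
qed

theorem lemma1:
  fixes n :: nat and w :: "nat list" and x :: nat
  assumes "set w \<subseteq> {1..n}"
    and "connected_every_timestep n w"
    and "x \<in> {1..n}"
  shows "(\<forall>t. 1 \<le> t \<and> t + degree n w x + 2 \<le> T w \<longrightarrow>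
            x \<in> letters w (S w t) (S w (t + degree n w x + 1) - 1))
         \<and> (degree n w x + 2 \<le> T w \<longrightarrow>
            x \<in> letters w (S w (T w - degree n w x - 1)) (length w))"
proof (intro conjI allI impI)
  fix t
  assume "1 \<le> t \<and> t + degree n w x + 2 \<le> T w"
  then show "x \<in> letters w (S w t) (S w (t + degree n w x + 1) - 1)"
    using mem_letters_degree_window[OF assms] by simp
next
  assume "degree n w x + 2 \<le> T w"
  then have "x \<in> letters w (S w (T w - degree n w x - 1)) (S w (T w) - 1)"
    using mem_letters_degree_window[OF assms, of "T w - degree n w x - 1"] by simp
  then show "x \<in> letters w (S w (T w - degree n w x - 1)) (length w)"
    using letters_subset_letters_length by blast
qed

end
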